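(* Let $n\ge1$ and $p$ a prime. The quotient $\Sigma(n,p)/\mathcal{R}(n,p)$ of the $p$-modular descent algebra by its radical is commutative.
   Context: A composition of $n$ is a sequence of positive integers with sum $n$. The descent algebra $\Sigma_n$ has basis $\{B_q\}$ indexed by compositions of $n$ with multiplication $B_qB_r=\sum_{Z\in S(q,r)}B_{c(Z)}$, where for $q=[a_1,\dots,a_s]$, $r=[b_1,\dots,b_t]$, $S(q,r)$ is the set of $s\times t$ non-negative integer matrices with row sums $a_i$ and column sums $b_j$, and $c(Z)$ is the composition obtained by reading the entries of $Z$ row by row and omitting zeros. Let $\mathcal{Z}_n$ be the subring of integral combinations of the $B_q$ and $\Sigma(n,p)=\mathcal{Z}_n/p\mathcal{Z}_n$ (the $p$-modular descent algebra), an $\mathbb{F}_p$-algebra with basis $\overline{B}_q$ (images of the $B_q$). $\mathcal{R}(n,p)$ denotes the (Jacobson) radical of $\Sigma(n,p)$. *)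

theory Defs
  imports "HOL-Algebra.Algebra"
begin

definition compositions :: "nat \<Rightarrow> nat list set" where
  "compositions n = {q. (\<forall>a\<in>set q. 0 < a) \<and> sum_list q = n}"

definition S_mat :: "nat list \<Rightarrow> nat list \<Rightarrow> nat list list set" where
  "S_mat q r = {Z. length Z = length q
      \<and> (\<forall>i<length q. length (Z!i) = length r \<and> sum_list (Z!i) = q!i)
      \<and> (\<forall>j<length r. (\<Sum>i<length q. Z!i!j) = r!j)}"

definition comp_of :: "nat list list \<Rightarrow> nat list" where
  "comp_of Z = filter (\<lambda>x. x \<noteq> 0) (concat Z)"

text \<open>Structure constants: B_q B_r = sum over c of struct_const q r c * B_c.\<close>
definition struct_const :: "nat list \<Rightarrow> nat list \<Rightarrow> nat list \<Rightarrow> nat" where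
  "struct_const q r c = card {Z \<in> S_mat q r. comp_of Z = c}"

text \<open>An element is the
  coefficient function (on compositions of n, zero elsewhere) with respect to the
  basis of images of B_q, coefficients represented by residues in {0..<p}.\<close>
definition descent_alg_mod :: "nat \<Rightarrow> nat \<Rightarrow> (nat list \<Rightarrow> int) ring" where
  "descent_alg_mod n p =
    \<lparr>partial_object.carrier = {f. (\<forall>q. f q \<in> {0..<int p}) \<and> (\<forall>q. q \<notin> compositions n \<longrightarrow> f q = 0)},
     monoid.mult = (\<lambda>f g c. if c \<in> compositions n then
               (\<Sum>q\<in>compositions n. \<Sum>r\<in>compositions n.
                   f q * g r * int (struct_const q r c)) mod int p
             else 0),
     monoid.one = (\<lambda>c. if c = [n] then 1 else 0),
     ring.zero = (\<lambda>c. 0),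
     ring.add = (\<lambda>f g c. (f c + g c) mod int p)\<rparr>"

definition left_ideal :: "('a, 'b) ring_scheme \<Rightarrow> 'a set \<Rightarrow> bool" where
  "left_ideal R I \<longleftrightarrow> additive_subgroup I R \<and>
     (\<forall>a\<in>carrier R. \<forall>x\<in>I. a \<otimes>\<^bsub>R\<^esub> x \<in> I)"

definition maximal_left_ideal :: "('a, 'b) ring_scheme \<Rightarrow> 'a set \<Rightarrow> bool" where
  "maximal_left_ideal R I \<longleftrightarrow> left_ideal R I \<and> I \<noteq> carrier R \<and>
     (\<forall>J. left_ideal R J \<and> I \<subseteq> J \<longrightarrow> J = I \<or> J = carrier R)"

definition jacobson_radical :: "('a, 'b) ring_scheme \<Rightarrow> 'a set" where
  "jacobson_radical R = carrier R \<inter> \<Inter> {I. maximal_left_ideal R I}"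

end

theory Submission
  imports Defs "HOL-Combinatorics.Permutations"
begin

text \<open>Let K consist of the elements whose coefficient sums over each rearrangement class of
  compositions vanish mod p (the kernel of Solomon's map B_q \<mapsto> mset q). Counting
  matrices shows that the class sums of B_q B_r are symmetric in q, r and depend on r only
  through its multiset, so K is a left ideal containing every commutator a b - b a. Right
  multiplication by K pushes the support to strictly longer compositions, so every element of
  K is nilpotent, and a Nakayama-type argument puts K into every maximal left ideal. Hence
  commutators lie in the radical.\<close>

section \<open>Matrices with prescribed margins\<close>

lemma length_le_sum_list: "\<forall>a\<in>set q. (0::nat) < a \<Longrightarrow> length q \<le> sum_list q"
  by (induction q) auto

lemma finite_compositions: "finite (compositions n)"
proof (rule finite_subset)
  show "compositions n \<subseteq> {xs. set xs \<subseteq> {0..n} \<and> length xs \<le> n}"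
    unfolding compositions_def using length_le_sum_list member_le_sum_list by fastforce
  show "finite {xs. set xs \<subseteq> {0..n} \<and> length xs \<le> n}"
    by (rule finite_lists_length_le) simp
qed

lemma map_sum_list_S_mat: "Z \<in> S_mat q r \<Longrightarrow> map sum_list Z = q"
  unfolding S_mat_def by (auto intro: nth_equalityI)

lemma finite_S_mat: "finite (S_mat q r)"
proof (rule finite_subset)
  let ?rows = "{xs. set xs \<subseteq> {0..sum_list q} \<and> length xs \<le> length r}"
  have "xs \<in> ?rows" if Z: "Z \<in> S_mat q r" and xs: "xs \<in> set Z" for Z xs
  proof -
    have "sum_list xs \<in> set q" using map_sum_list_S_mat[OF Z] xs by force
    then have "\<forall>x\<in>set xs. x \<le> sum_list q"
      using member_le_sum_list order_trans by blast
    moreover have "length xs = length r"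
      using Z xs unfolding S_mat_def by (auto simp: in_set_conv_nth)
    ultimately show ?thesis by auto
  qed
  then show "S_mat q r \<subseteq> {Z. set Z \<subseteq> ?rows \<and> length Z \<le> length q}"
    by (auto simp: S_mat_def)
  show "finite {Z. set Z \<subseteq> ?rows \<and> length Z \<le> length q}"
    by (intro finite_lists_length_le) simp_all
qed

lemma sum_list_filter_nonzero: "sum_list (filter (\<lambda>x. x \<noteq> 0) xs) = (sum_list xs :: nat)"
  by (induction xs) simp_all

lemma comp_of_in_compositions:
  assumes "Z \<in> S_mat q r" "q \<in> compositions n"
  shows "comp_of Z \<in> compositions n"
proof -
  have "sum_list (comp_of Z) = sum_list (map sum_list Z)"
    unfolding comp_of_def sum_list_filter_nonzero by (induction Z) auto
  then show ?thesis
    using assms map_sum_list_S_mat[OF assms(1)] unfolding compositions_def comp_of_def by auto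
qed

lemma length_le_length_concat:
  "\<forall>xs\<in>set xss. xs \<noteq> [] \<Longrightarrow> length xss \<le> length (concat xss)"
  by (induction xss) (auto simp flip: length_greater_0_conv)

lemma length_concat_filter_nonzero:
  assumes "\<forall>xs\<in>set Zs. (0::nat) < sum_list xs"
  shows "length Zs \<le> length (concat (map (filter (\<lambda>x. x \<noteq> 0)) Zs))"
    and "length (concat (map (filter (\<lambda>x. x \<noteq> 0)) Zs)) \<le> length Zs
         \<Longrightarrow> concat (map (filter (\<lambda>x. x \<noteq> 0)) Zs) = map sum_list Zs"
proof -
  let ?f = "filter (\<lambda>x. x \<noteq> (0::nat))"
  have nonempty: "\<forall>xs\<in>set Zs. ?f xs \<noteq> []"
  proof
    fix xs assume xs: "xs \<in> set Zs"
    show "?f xs \<noteq> []"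
    proof
      assume "?f xs = []"
      then have "sum_list xs = 0" using sum_list_filter_nonzero[of xs] by simp
      moreover have "0 < sum_list xs" using assms xs by blast
      ultimately show False by linarith
    qed
  qed
  then show "length Zs \<le> length (concat (map ?f Zs))"
    using length_le_length_concat[of "map ?f Zs"] by auto
  from nonempty show "length (concat (map ?f Zs)) \<le> length Zs \<Longrightarrow> concat (map ?f Zs) = map sum_list Zs"
  proof (induction Zs)
    case (Cons xs Zs)
    have "\<forall>ys\<in>set (map ?f Zs). ys \<noteq> []" using Cons.prems by simp
    from length_le_length_concat[OF this] have "length Zs \<le> length (concat (map ?f Zs))"
      by simp
    with Cons.prems have "length (?f xs) = 1" "length (concat (map ?f Zs)) \<le> length Zs"
      by (auto simp flip: length_greater_0_conv)
    then obtain y where "?f xs = [y]" by (auto simp: length_Suc_conv)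
    moreover have "y = sum_list xs" using calculation sum_list_filter_nonzero[of xs] by simp
    ultimately show ?case using Cons by simp
  qed simp
qed

lemma length_comp_of:
  assumes Z: "Z \<in> S_mat q r" and q: "\<forall>a\<in>set q. 0 < a"
  shows "length q \<le> length (comp_of Z)"
    and "length (comp_of Z) \<le> length q \<Longrightarrow> comp_of Z = q"
proof -
  have rows: "map sum_list Z = q" by (rule map_sum_list_S_mat[OF Z])
  have "\<forall>xs\<in>set Z. 0 < sum_list xs" using q unfolding rows[symmetric] by simp
  note lengths = length_concat_filter_nonzero[OF this]
  have comp: "comp_of Z = concat (map (filter (\<lambda>x. x \<noteq> 0)) Z)"
    unfolding comp_of_def by (rule filter_concat)
  have "length Z = length q" using rows by auto
  then show "length q \<le> length (comp_of Z)"
    and "length (comp_of Z) \<le> length q \<Longrightarrow> comp_of Z = q"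
    using lengths rows unfolding comp by simp_all
qed

lemma struct_const_eq_0:
  assumes "\<forall>a\<in>set s. 0 < a" "length c \<le> length s" "c \<noteq> s"
  shows "struct_const s q c = 0"
proof -
  have "comp_of Z \<noteq> c" if "Z \<in> S_mat s q" for Z
    by (metis assms(2,3) length_comp_of(2)[OF that assms(1)])
  then have "{Z \<in> S_mat s q. comp_of Z = c} = {}" by blast
  then show ?thesis unfolding struct_const_def by (simp only: card.empty)
qed

lemma S_mat_single_column:
  assumes "q \<in> compositions n"
  shows "S_mat q [n] = {map (\<lambda>a. [a]) q}"
proof
  show "S_mat q [n] \<subseteq> {map (\<lambda>a. [a]) q}"
  proof
    fix Z assume Z: "Z \<in> S_mat q [n]"
    have "Z = map (\<lambda>a. [a]) q"
    proof (rule nth_equalityI)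
      show "length Z = length (map (\<lambda>a. [a]) q)" using Z unfolding S_mat_def by simp
    next
      fix i assume "i < length Z"
      then have i: "i < length q" using Z unfolding S_mat_def by simp
      then have "length (Z!i) = 1" "sum_list (Z!i) = q!i" using Z unfolding S_mat_def by auto
      then show "Z!i = map (\<lambda>a. [a]) q ! i" using i by (cases "Z!i") auto
    qed
    then show "Z \<in> {map (\<lambda>a. [a]) q}" by simp
  qed
next
  have "(\<Sum>i<length q. q!i) = n" using assms unfolding compositions_def
    by (simp add: sum_list_sum_nth atLeast0LessThan)
  then show "{map (\<lambda>a. [a]) q} \<subseteq> S_mat q [n]" unfolding S_mat_def by auto
qed

lemma struct_const_single_column:
  assumes "q \<in> compositions n"
  shows "struct_const q [n] c = (if c = q then 1 else 0)"
proof -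
  have "comp_of (map (\<lambda>a. [a]) q) = q"
    using assms unfolding compositions_def comp_of_def by (induction q) auto
  then have "{Z \<in> {map (\<lambda>a. [a]) q}. comp_of Z = c} = (if c = q then {map (\<lambda>a. [a]) q} else {})"
    by auto
  then show ?thesis unfolding struct_const_def S_mat_single_column[OF assms] by simp
qed

definition mset_struct_const :: "nat list \<Rightarrow> nat list \<Rightarrow> nat multiset \<Rightarrow> nat" where
  "mset_struct_const q r \<mu> = card {Z \<in> S_mat q r. mset (comp_of Z) = \<mu>}"

lemma sum_struct_const_mset:
  assumes q: "q \<in> compositions n"
  shows "(\<Sum>c\<in>{c \<in> compositions n. mset c = \<mu>}. struct_const q r c) = mset_struct_const q r \<mu>"
proof -
  have "{Z \<in> S_mat q r. mset (comp_of Z) = \<mu>} =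
        (\<Union>c\<in>{c \<in> compositions n. mset c = \<mu>}. {Z \<in> S_mat q r. comp_of Z = c})"
    using comp_of_in_compositions[OF _ q] by auto
  then have "mset_struct_const q r \<mu>
      = card (\<Union>c\<in>{c \<in> compositions n. mset c = \<mu>}. {Z \<in> S_mat q r. comp_of Z = c})"
    unfolding mset_struct_const_def by simp
  also have "\<dots> = (\<Sum>c\<in>{c \<in> compositions n. mset c = \<mu>}. card {Z \<in> S_mat q r. comp_of Z = c})"
    by (rule card_UN_disjoint) (auto simp: finite_compositions finite_S_mat)
  finally show ?thesis unfolding struct_const_def by simp
qed

lemma struct_const_self:
  assumes "\<forall>a\<in>set c. 0 < a"
  shows "struct_const c q c = mset_struct_const c q (mset c)"
proof -
  have "comp_of Z = c" if Z: "Z \<in> S_mat c q" and "mset (comp_of Z) = mset c" for Z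
  proof -
    have "length (comp_of Z) = length c" using that(2) by (metis size_mset)
    then show ?thesis using length_comp_of(2)[OF Z assms] by simp
  qed
  then have "{Z \<in> S_mat c q. comp_of Z = c} = {Z \<in> S_mat c q. mset (comp_of Z) = mset c}"
    by auto
  then show ?thesis unfolding struct_const_def mset_struct_const_def by simp
qed

lemma mset_struct_const_le_rearrange:
  assumes "\<And>Z. Z \<in> S_mat q r \<Longrightarrow> F Z \<in> S_mat q' r' \<and> mset (concat (F Z)) = mset (concat Z)"
    and "\<And>Z. Z \<in> S_mat q r \<Longrightarrow> G (F Z) = Z"
  shows "mset_struct_const q r \<mu> \<le> mset_struct_const q' r' \<mu>"
  unfolding mset_struct_const_def
proof (rule card_inj_on_le)
  show "inj_on F {Z \<in> S_mat q r. mset (comp_of Z) = \<mu>}"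
    by (rule inj_on_inverseI[where g = G]) (simp add: assms(2))
  have "F Z \<in> S_mat q' r' \<and> mset (comp_of (F Z)) = mset (comp_of Z)" if "Z \<in> S_mat q r" for Z
    using assms(1)[OF that] unfolding comp_of_def by simp
  then show "F ` {Z \<in> S_mat q r. mset (comp_of Z) = \<mu>} \<subseteq> {Z \<in> S_mat q' r'. mset (comp_of Z) = \<mu>}"
    by auto
  show "finite {Z \<in> S_mat q' r'. mset (comp_of Z) = \<mu>}" using finite_S_mat by simp
qed

lemma S_mat_permute_columns:
  assumes \<sigma>: "\<sigma> permutes {..<length r}" and Z: "Z \<in> S_mat q r"
  shows "map (permute_list \<sigma>) Z \<in> S_mat q (permute_list \<sigma> r)"
proof -
  have lZ: "length Z = length q"
    and rows: "\<And>i. i < length q \<Longrightarrow> length (Z!i) = length r \<and> sum_list (Z!i) = q!i"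
    and cols: "\<And>j. j < length r \<Longrightarrow> (\<Sum>i<length q. Z!i!j) = r!j"
    using Z unfolding S_mat_def by auto
  show ?thesis
    unfolding S_mat_def
  proof (intro CollectI conjI allI impI)
    show "length (map (permute_list \<sigma>) Z) = length q" using lZ by simp
  next
    fix i assume i: "i < length q"
    show "length (map (permute_list \<sigma>) Z ! i) = length (permute_list \<sigma> r)"
      using lZ rows[OF i] i by simp
    have "sum_list (permute_list \<sigma> (Z!i)) = sum_list (Z!i)"
      using rows[OF i] \<sigma> by (metis mset_permute_list sum_mset_sum_list)
    then show "sum_list (map (permute_list \<sigma>) Z ! i) = q!i" using lZ rows[OF i] i by simp
  next
    fix j assume "j < length (permute_list \<sigma> r)"
    then have j: "j < length r" by simp
    have "(\<Sum>i<length q. map (permute_list \<sigma>) Z ! i ! j) = (\<Sum>i<length q. Z!i!(\<sigma> j))"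
    proof (rule sum.cong)
      fix i assume "i \<in> {..<length q}"
      then have i: "i < length q" by simp
      show "map (permute_list \<sigma>) Z ! i ! j = Z!i!(\<sigma> j)"
        using lZ i rows[OF i] \<sigma> j by (simp add: permute_list_nth)
    qed simp
    also have "\<dots> = r!(\<sigma> j)" using cols permutes_in_image[OF \<sigma>] j by simp
    also have "\<dots> = permute_list \<sigma> r ! j" using permute_list_nth[OF \<sigma> j] by simp
    finally show "(\<Sum>i<length q. map (permute_list \<sigma>) Z ! i ! j) = permute_list \<sigma> r ! j" .
  qed
qed

lemma mset_struct_const_permute_le:
  assumes "mset r = mset r'"
  shows "mset_struct_const q r' \<mu> \<le> mset_struct_const q r \<mu>"
proof -
  obtain \<sigma> where \<sigma>: "\<sigma> permutes {..<length r'}" "permute_list \<sigma> r' = r"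
    using mset_eq_permutation[OF assms] by blast
  have undo: "permute_list (Hilbert_Choice.inv \<sigma>) (permute_list \<sigma> xs) = xs"
    if "length xs = length r'" for xs :: "nat list"
  proof -
    have "Hilbert_Choice.inv \<sigma> permutes {..<length xs}" using permutes_inv[OF \<sigma>(1)] that by simp
    then have "permute_list (Hilbert_Choice.inv \<sigma>) (permute_list \<sigma> xs)
        = permute_list (\<sigma> \<circ> Hilbert_Choice.inv \<sigma>) xs"
      by (rule permute_list_compose[symmetric])
    then show ?thesis using permutes_inv_o(1)[OF \<sigma>(1)] by simp
  qed
  show ?thesis
  proof (rule mset_struct_const_le_rearrange[where F = "map (permute_list \<sigma>)"
        and G = "map (permute_list (Hilbert_Choice.inv \<sigma>))"])
    fix Z assume Z: "Z \<in> S_mat q r'"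
    then have rows: "\<forall>xs\<in>set Z. length xs = length r'"
      unfolding S_mat_def by (auto simp: in_set_conv_nth)
    have "mset (concat (map (permute_list \<sigma>) Z)) = mset (concat Z)"
      using rows \<sigma>(1) by (induction Z) auto
    then show "map (permute_list \<sigma>) Z \<in> S_mat q r \<and> mset (concat (map (permute_list \<sigma>) Z)) = mset (concat Z)"
      using S_mat_permute_columns[OF \<sigma>(1) Z] \<sigma>(2) by simp
    show "map (permute_list (Hilbert_Choice.inv \<sigma>)) (map (permute_list \<sigma>) Z) = Z"
      using rows undo by (simp add: map_idI)
  qed
qed

lemma mset_struct_const_permute: "mset r = mset r' \<Longrightarrow> mset_struct_const q r \<mu> = mset_struct_const q r' \<mu>"
  by (metis mset_struct_const_permute_le le_antisym)

lemma sum_list_map_upt: "sum_list (map f [0..<k]) = (\<Sum>i<k. f i)"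
  by (induction k) auto

lemma mset_concat_sum: "mset (concat Z) = (\<Sum>i<length Z. mset (Z!i))"
proof -
  have "mset (concat Z) = sum_list (map mset Z)" by (induction Z) auto
  also have "\<dots> = (\<Sum>i<length Z. mset (Z!i))"
    by (subst map_nth[symmetric]) (simp only: map_map o_def sum_list_map_upt)
  finally show ?thesis .
qed

lemma mset_sum_nth: "mset xs = (\<Sum>j<length xs. {#xs!j#})"
proof -
  have "mset xs = sum_list (map (\<lambda>x. {#x#}) xs)" by (induction xs) auto
  also have "\<dots> = (\<Sum>j<length xs. {#xs!j#})"
    by (subst map_nth[symmetric]) (simp only: map_map o_def sum_list_map_upt)
  finally show ?thesis .
qed

text \<open>The number of columns is an explicit argument, since a matrix without rows does not
  determine it.\<close>
definition transpose_mat :: "nat \<Rightarrow> nat list list \<Rightarrow> nat list list" where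
  "transpose_mat m Z = map (\<lambda>j. map (\<lambda>i. Z!i!j) [0..<length Z]) [0..<m]"

lemma S_mat_transpose_mat:
  assumes Z: "Z \<in> S_mat q r"
  shows "transpose_mat (length r) Z \<in> S_mat r q"
proof -
  let ?T = "transpose_mat (length r) Z"
  have lZ: "length Z = length q"
    and rows: "\<And>i. i < length q \<Longrightarrow> length (Z!i) = length r \<and> sum_list (Z!i) = q!i"
    and cols: "\<And>j. j < length r \<Longrightarrow> (\<Sum>i<length q. Z!i!j) = r!j"
    using Z unfolding S_mat_def by auto
  show ?thesis
    unfolding S_mat_def
  proof (intro CollectI conjI allI impI)
    show "length ?T = length r" by (simp add: transpose_mat_def)
  next
    fix j assume j: "j < length r"
    show "length (?T!j) = length q" using lZ j by (simp add: transpose_mat_def)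
    show "sum_list (?T!j) = r!j" using lZ j cols[OF j] by (simp add: transpose_mat_def sum_list_map_upt)
  next
    fix i assume i: "i < length q"
    have "(\<Sum>j<length r. ?T!j!i) = (\<Sum>j<length r. Z!i!j)"
      using lZ i by (simp add: transpose_mat_def)
    also have "\<dots> = sum_list (Z!i)" using rows[OF i] by (simp add: sum_list_sum_nth atLeast0LessThan)
    finally show "(\<Sum>j<length r. ?T!j!i) = q!i" using rows[OF i] by simp
  qed
qed

lemma mset_concat_transpose_mat:
  assumes Z: "Z \<in> S_mat q r"
  shows "mset (concat (transpose_mat (length r) Z)) = mset (concat Z)"
proof -
  have lZ: "length Z = length q" and rows: "\<And>i. i < length q \<Longrightarrow> length (Z!i) = length r"
    using Z unfolding S_mat_def by auto
  have "mset (concat (transpose_mat (length r) Z)) = (\<Sum>j<length r. \<Sum>i<length q. {#Z!i!j#})"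
    unfolding mset_concat_sum transpose_mat_def by (simp add: mset_sum_nth lZ)
  also have "\<dots> = (\<Sum>i<length q. \<Sum>j<length r. {#Z!i!j#})" by (rule sum.swap)
  also have "\<dots> = mset (concat Z)"
    unfolding mset_concat_sum lZ by (rule sum.cong) (simp_all add: mset_sum_nth rows)
  finally show ?thesis .
qed

lemma transpose_mat_transpose_mat:
  assumes Z: "Z \<in> S_mat q r"
  shows "transpose_mat (length q) (transpose_mat (length r) Z) = Z"
proof -
  let ?T = "transpose_mat (length q) (transpose_mat (length r) Z)"
  have lZ: "length Z = length q" and rows: "\<And>i. i < length q \<Longrightarrow> length (Z!i) = length r"
    using Z unfolding S_mat_def by auto
  show ?thesis
  proof (rule nth_equalityI)
    show "length ?T = length Z" using lZ by (simp add: transpose_mat_def)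
  next
    fix i assume "i < length ?T"
    then have i: "i < length q" by (simp add: transpose_mat_def)
    show "?T!i = Z!i"
    proof (rule nth_equalityI)
      show "length (?T!i) = length (Z!i)" using rows[OF i] i by (simp add: transpose_mat_def)
    next
      fix k assume "k < length (?T!i)"
      then have k: "k < length r" using i by (simp add: transpose_mat_def)
      show "?T!i!k = Z!i!k" using i k lZ by (simp add: transpose_mat_def)
    qed
  qed
qed

lemma mset_struct_const_transpose: "mset_struct_const q r \<mu> = mset_struct_const r q \<mu>"
proof -
  have le: "mset_struct_const q r \<mu> \<le> mset_struct_const r q \<mu>" for q r
    by (rule mset_struct_const_le_rearrange[where F = "transpose_mat (length r)"
          and G = "transpose_mat (length q)"])
      (simp_all add: S_mat_transpose_mat mset_concat_transpose_mat transpose_mat_transpose_mat)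
  show ?thesis using le[of q r] le[of r q] by simp
qed

section \<open>Nilpotent left ideals and the radical\<close>

lemma (in abelian_group) additive_subgroup_jacobson_radical:
  "additive_subgroup (jacobson_radical G) G"
proof -
  let ?A = "insert (carrier G) {I. maximal_left_ideal G I}"
  have "subgroup H (add_monoid G)" if "H \<in> ?A" for H
    using that add.subgroup_self
    unfolding maximal_left_ideal_def left_ideal_def additive_subgroup_def by auto
  then have "subgroup (\<Inter>?A) (add_monoid G)" by (intro add.subgroups_Inter) auto
  moreover have "jacobson_radical G = \<Inter>?A" unfolding jacobson_radical_def by auto
  ultimately show ?thesis by (simp add: additive_subgroupI)
qed

lemma (in abelian_group) FactRing_mult_commute:
  assumes I: "additive_subgroup I G"
    and m_closed: "\<And>a b. a \<in> carrier G \<Longrightarrow> b \<in> carrier G \<Longrightarrow> a \<otimes> b \<in> carrier G"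
    and comm: "\<And>a b. a \<in> carrier G \<Longrightarrow> b \<in> carrier G \<Longrightarrow> a \<otimes> b \<ominus> b \<otimes> a \<in> I"
    and A: "A \<in> carrier (G Quot I)" and B: "B \<in> carrier (G Quot I)"
  shows "A \<otimes>\<^bsub>G Quot I\<^esub> B = B \<otimes>\<^bsub>G Quot I\<^esub> A"
proof -
  interpret abelian_subgroup I G by (intro abelian_subgroupI3 I) unfold_locales
  have coset_comm: "I +> (a \<otimes> b) = I +> (b \<otimes> a)" if "a \<in> carrier G" "b \<in> carrier G" for a b
  proof -
    have "a \<otimes> b \<in> I +> (b \<otimes> a)"
      using a_rcos_module_rev[of "b \<otimes> a" "a \<otimes> b"] comm[OF that] m_closed that
      by (simp add: minus_eq)
    then show ?thesis using a_repr_independence' m_closed that by metis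
  qed
  have sub: "A \<subseteq> carrier G" "B \<subseteq> carrier G"
    using A B a_rcosets_carrier by (simp_all add: FactRing_def)
  have "A \<otimes>\<^bsub>G Quot I\<^esub> B = (\<Union>a\<in>A. \<Union>b\<in>B. I +> (a \<otimes> b))"
    by (simp add: FactRing_def rcoset_mult_def)
  also have "\<dots> = (\<Union>a\<in>A. \<Union>b\<in>B. I +> (b \<otimes> a))"
    using coset_comm sub by (intro SUP_cong refl) blast
  also have "\<dots> = (\<Union>b\<in>B. \<Union>a\<in>A. I +> (b \<otimes> a))"
    by (rule SUP_commute)
  also have "\<dots> = B \<otimes>\<^bsub>G Quot I\<^esub> A"
    by (simp add: FactRing_def rcoset_mult_def)
  finally show ?thesis .
qed

text \<open>No associativity of multiplication is assumed: the argument never needs it, and it is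
  not proved for the descent algebra here.\<close>
locale right_unital_distrib = abelian_group R for R (structure) +
  assumes m_closed: "\<lbrakk>x \<in> carrier R; y \<in> carrier R\<rbrakk> \<Longrightarrow> x \<otimes> y \<in> carrier R"
    and one_closed: "\<one> \<in> carrier R"
    and r_one: "x \<in> carrier R \<Longrightarrow> x \<otimes> \<one> = x"
    and r_distr: "\<lbrakk>x \<in> carrier R; y \<in> carrier R; z \<in> carrier R\<rbrakk> \<Longrightarrow> z \<otimes> (x \<oplus> y) = z \<otimes> x \<oplus> z \<otimes> y"
begin

lemma left_ideal_set_add:
  assumes "left_ideal R I" "left_ideal R J"
  shows "left_ideal R (I <+> J)"
proof -
  have sub: "additive_subgroup I R" "additive_subgroup J R"
    using assms unfolding left_ideal_def by auto
  have "a \<otimes> (x \<oplus> y) \<in> I <+> J" if "a \<in> carrier R" "x \<in> I" "y \<in> J" for a x y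
  proof -
    have "a \<otimes> (x \<oplus> y) = a \<otimes> x \<oplus> a \<otimes> y"
      using that sub additive_subgroup.a_Hcarr r_distr by metis
    moreover have "a \<otimes> x \<in> I" "a \<otimes> y \<in> J" using assms that unfolding left_ideal_def by auto
    ultimately show ?thesis unfolding set_add_def' by blast
  qed
  then show ?thesis
    unfolding left_ideal_def set_add_def'[symmetric]
    using add_additive_subgroups[OF sub] by (auto simp: set_add_def')
qed

lemma one_in_left_ideal_add_right_power:
  assumes M: "left_ideal R M" and m: "m \<in> M" and y: "y \<in> carrier R" and one: "\<one> = m \<oplus> y"
  shows "\<exists>m'\<in>M. \<one> = m' \<oplus> ((\<lambda>w. w \<otimes> y) ^^ j) \<one>"
proof (induction j)
  case 0
  show ?case
    using M one_closed unfolding left_ideal_def by (auto intro!: bexI[of _ \<zero>] additive_subgroup.zero_closed)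
next
  case (Suc j)
  let ?z = "((\<lambda>w. w \<otimes> y) ^^ j) \<one>"
  have z: "?z \<in> carrier R" by (induction j) (simp_all add: one_closed m_closed y)
  have M_sub: "M \<subseteq> carrier R" and M_mult: "?z \<otimes> m \<in> M"
    using M m z additive_subgroup.a_subset unfolding left_ideal_def by auto
  obtain m' where m': "m' \<in> M" "\<one> = m' \<oplus> ?z" using Suc by blast
  have "?z = ?z \<otimes> m \<oplus> ((\<lambda>w. w \<otimes> y) ^^ Suc j) \<one>"
    using r_one[OF z] r_distr[OF _ y z] m M_sub one by auto
  then have "\<one> = (m' \<oplus> ?z \<otimes> m) \<oplus> ((\<lambda>w. w \<otimes> y) ^^ Suc j) \<one>"
    using m' M_sub M_mult z y by (simp add: a_assoc m_closed subsetD)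
  moreover have "m' \<oplus> ?z \<otimes> m \<in> M"
    using M m'(1) M_mult unfolding left_ideal_def by (auto intro: additive_subgroup.a_closed)
  ultimately show ?case by blast
qed

text \<open>As in Nakayama's lemma: if K is not inside M then M + K is everything, so 1 = m + y;
  multiplying on the right by y repeatedly gives 1 in M + y^j for all j, and nilpotency of y
  puts 1 into M.\<close>
lemma right_nil_left_ideal_subset_maximal_left_ideal:
  assumes K: "left_ideal R K" and nil: "\<forall>y\<in>K. \<exists>N. ((\<lambda>w. w \<otimes> y) ^^ N) \<one> = \<zero>"
    and M: "maximal_left_ideal R M"
  shows "K \<subseteq> M"
proof (rule ccontr)
  assume "\<not> K \<subseteq> M"
  then obtain y0 where y0: "y0 \<in> K" "y0 \<notin> M" by blast
  have M_ideal: "left_ideal R M" and M_proper: "M \<noteq> carrier R"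
    and M_max: "\<And>J. left_ideal R J \<Longrightarrow> M \<subseteq> J \<Longrightarrow> J = M \<or> J = carrier R"
    using M unfolding maximal_left_ideal_def by auto
  interpret M: additive_subgroup M R using M_ideal unfolding left_ideal_def by simp
  interpret K: additive_subgroup K R using K unfolding left_ideal_def by simp
  have "M \<subseteq> M <+> K"
    unfolding set_add_def' by (force intro: r_zero[symmetric])
  moreover have "y0 \<in> M <+> K"
    using y0 unfolding set_add_def' by (force intro: l_zero[symmetric])
  ultimately have "M <+> K = carrier R"
    using M_max[OF left_ideal_set_add[OF M_ideal K]] y0(2) by blast
  then obtain m y where my: "m \<in> M" "y \<in> K" "\<one> = m \<oplus> y"
    using one_closed unfolding set_add_def' by blast
  obtain N where "((\<lambda>w. w \<otimes> y) ^^ N) \<one> = \<zero>" using nil my(2) by blast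
  moreover obtain m' where "m' \<in> M" "\<one> = m' \<oplus> ((\<lambda>w. w \<otimes> y) ^^ N) \<one>"
    using one_in_left_ideal_add_right_power[OF M_ideal my(1) K.a_Hcarr[OF my(2)] my(3)] by blast
  ultimately have one_M: "\<one> \<in> M" by simp
  have "carrier R \<subseteq> M"
  proof
    fix x assume "x \<in> carrier R"
    then show "x \<in> M" using M_ideal one_M r_one unfolding left_ideal_def by metis
  qed
  then show False using M_proper M.a_subset by blast
qed

lemma right_nil_left_ideal_subset_jacobson_radical:
  assumes "left_ideal R K" and "\<forall>y\<in>K. \<exists>N. ((\<lambda>w. w \<otimes> y) ^^ N) \<one> = \<zero>"
  shows "K \<subseteq> jacobson_radical R"
proof -
  have "K \<subseteq> carrier R"
    using assms(1) additive_subgroup.a_subset unfolding left_ideal_def by blast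
  then show ?thesis
    using right_nil_left_ideal_subset_maximal_left_ideal[OF assms] unfolding jacobson_radical_def by blast
qed

end

section \<open>The modular descent algebra\<close>

lemma sum_mod_cong:
  "(\<And>i. i \<in> A \<Longrightarrow> f i mod m = g i mod m) \<Longrightarrow> sum f A mod m = sum g A mod (m::int)"
  by (metis (no_types, lifting) mod_sum_eq sum.cong)

locale mod_descent_algebra =
  fixes n p :: nat
  assumes n_pos: "1 \<le> n" and p_gt_1: "1 < p"
begin

abbreviation R where "R \<equiv> descent_alg_mod n p"
abbreviation C where "C \<equiv> compositions n"

definition mult_coeff :: "(nat list \<Rightarrow> int) \<Rightarrow> (nat list \<Rightarrow> int) \<Rightarrow> nat list \<Rightarrow> int" where
  "mult_coeff f g c = (\<Sum>q\<in>C. \<Sum>r\<in>C. f q * g r * int (struct_const q r c))"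

lemma carrier_R: "carrier R = {f. (\<forall>q. f q \<in> {0..<int p}) \<and> (\<forall>q. q \<notin> C \<longrightarrow> f q = 0)}"
  by (simp add: descent_alg_mod_def)

lemma mult_R: "x \<otimes>\<^bsub>R\<^esub> y = (\<lambda>c. if c \<in> C then mult_coeff x y c mod p else 0)"
  unfolding mult_coeff_def by (simp add: descent_alg_mod_def)

lemma add_R: "x \<oplus>\<^bsub>R\<^esub> y = (\<lambda>c. (x c + y c) mod p)"
  by (simp add: descent_alg_mod_def)

lemma one_R: "\<one>\<^bsub>R\<^esub> = (\<lambda>c. if c = [n] then 1 else 0)"
  by (simp add: descent_alg_mod_def)

lemma zero_R: "\<zero>\<^bsub>R\<^esub> = (\<lambda>c. 0)"
  by (simp add: descent_alg_mod_def)

lemma single_part_in_compositions: "[n] \<in> C"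
  using n_pos by (simp add: compositions_def)

lemma carrier_RI: "(\<And>q. 0 \<le> f q \<and> f q < int p) \<Longrightarrow> (\<And>q. q \<notin> C \<Longrightarrow> f q = 0) \<Longrightarrow> f \<in> carrier R"
  by (simp add: carrier_R)

lemma carrier_RD:
  "f \<in> carrier R \<Longrightarrow> 0 \<le> f q \<and> f q < int p"
  "f \<in> carrier R \<Longrightarrow> q \<notin> C \<Longrightarrow> f q = 0"
  by (auto simp: carrier_R)

lemma mod_p_carrier: "f \<in> carrier R \<Longrightarrow> f q mod int p = f q"
  using carrier_RD(1)[of f q] by simp

lemma mult_R_closed: "x \<otimes>\<^bsub>R\<^esub> y \<in> carrier R"
  by (rule carrier_RI) (use p_gt_1 in \<open>auto simp: mult_R\<close>)

lemma one_R_closed: "\<one>\<^bsub>R\<^esub> \<in> carrier R"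
  by (rule carrier_RI) (use p_gt_1 single_part_in_compositions in \<open>auto simp: one_R\<close>)

lemma abelian_group_R: "abelian_group R"
proof (rule abelian_groupI)
  fix x y z assume x: "x \<in> carrier R" and y: "y \<in> carrier R" and z: "z \<in> carrier R"
  show "x \<oplus>\<^bsub>R\<^esub> y \<in> carrier R"
    by (rule carrier_RI) (use p_gt_1 x y in \<open>auto simp: add_R carrier_RD\<close>)
  show "x \<oplus>\<^bsub>R\<^esub> y \<oplus>\<^bsub>R\<^esub> z = x \<oplus>\<^bsub>R\<^esub> (y \<oplus>\<^bsub>R\<^esub> z)"
    by (simp add: add_R mod_simps add.assoc)
  show "x \<oplus>\<^bsub>R\<^esub> y = y \<oplus>\<^bsub>R\<^esub> x"
    by (simp add: add_R add.commute)
  show "\<zero>\<^bsub>R\<^esub> \<oplus>\<^bsub>R\<^esub> x = x"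
    using x by (simp add: add_R zero_R mod_p_carrier)
  have "(\<lambda>c. (- x c) mod p) \<in> carrier R"
    by (rule carrier_RI) (use p_gt_1 x in \<open>auto simp: carrier_RD\<close>)
  moreover have "(\<lambda>c. (- x c) mod p) \<oplus>\<^bsub>R\<^esub> x = \<zero>\<^bsub>R\<^esub>"
    by (simp add: add_R zero_R mod_simps)
  ultimately show "\<exists>y\<in>carrier R. y \<oplus>\<^bsub>R\<^esub> x = \<zero>\<^bsub>R\<^esub>" by blast
qed (use p_gt_1 in \<open>auto intro: carrier_RI simp: zero_R\<close>)

lemma mult_coeff_mod_cong:
  assumes "\<And>r. u r mod int p = v r mod int p"
  shows "mult_coeff a u c mod int p = mult_coeff a v c mod int p"
proof -
  have "a q * u r * int (struct_const q r c) mod p = a q * v r * int (struct_const q r c) mod p"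
    for q r
    using mod_mult_cong[OF mod_mult_cong[OF refl assms[of r]] refl] by blast
  then show ?thesis
    unfolding mult_coeff_def by (intro sum_mod_cong) auto
qed

lemma mult_R_add: "a \<otimes>\<^bsub>R\<^esub> (u \<oplus>\<^bsub>R\<^esub> v) = (a \<otimes>\<^bsub>R\<^esub> u) \<oplus>\<^bsub>R\<^esub> (a \<otimes>\<^bsub>R\<^esub> v)"
proof
  fix c
  have "mult_coeff a (u \<oplus>\<^bsub>R\<^esub> v) c mod p = mult_coeff a (\<lambda>r. u r + v r) c mod p"
    by (rule mult_coeff_mod_cong) (simp add: add_R)
  moreover have "mult_coeff a (\<lambda>r. u r + v r) c = mult_coeff a u c + mult_coeff a v c"
    unfolding mult_coeff_def by (simp add: sum.distrib algebra_simps)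
  ultimately show "(a \<otimes>\<^bsub>R\<^esub> (u \<oplus>\<^bsub>R\<^esub> v)) c = ((a \<otimes>\<^bsub>R\<^esub> u) \<oplus>\<^bsub>R\<^esub> (a \<otimes>\<^bsub>R\<^esub> v)) c"
    by (simp add: mult_R add_R mod_simps)
qed

lemma mult_R_one: assumes x: "x \<in> carrier R" shows "x \<otimes>\<^bsub>R\<^esub> \<one>\<^bsub>R\<^esub> = x"
proof
  fix c
  show "(x \<otimes>\<^bsub>R\<^esub> \<one>\<^bsub>R\<^esub>) c = x c"
  proof (cases "c \<in> C")
    case False
    then show ?thesis using carrier_RD(2)[OF x False] by (simp add: mult_R)
  next
    case True
    have "mult_coeff x \<one>\<^bsub>R\<^esub> c = (\<Sum>q\<in>C. x q * int (struct_const q [n] c))"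
      unfolding mult_coeff_def
    proof (rule sum.cong[OF refl])
      fix q
      have "(\<Sum>r\<in>C. x q * \<one>\<^bsub>R\<^esub> r * int (struct_const q r c)) =
            (\<Sum>r\<in>C. if r = [n] then x q * int (struct_const q [n] c) else 0)"
        by (rule sum.cong) (auto simp: one_R)
      also have "\<dots> = x q * int (struct_const q [n] c)"
        using finite_compositions single_part_in_compositions by (simp add: sum.delta)
      finally show "(\<Sum>r\<in>C. x q * \<one>\<^bsub>R\<^esub> r * int (struct_const q r c)) = x q * int (struct_const q [n] c)" .
    qed
    also have "\<dots> = (\<Sum>q\<in>C. if q = c then x q else 0)"
      by (rule sum.cong[OF refl]) (simp add: struct_const_single_column)
    also have "\<dots> = x c" using True finite_compositions by (simp add: sum.delta)
    finally show ?thesis using True mod_p_carrier[OF x] by (simp add: mult_R)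
  qed
qed

lemma right_unital_distrib_R: "right_unital_distrib R"
  using abelian_group_R mult_R_closed one_R_closed mult_R_one mult_R_add
  by (simp add: right_unital_distrib_def right_unital_distrib_axioms_def)

definition class_sum :: "(nat list \<Rightarrow> int) \<Rightarrow> nat multiset \<Rightarrow> int" where
  "class_sum x \<mu> = (\<Sum>c\<in>{c \<in> C. mset c = \<mu>}. x c)"

definition class_kernel :: "(nat list \<Rightarrow> int) set" where
  "class_kernel = {x \<in> carrier R. \<forall>\<mu>. class_sum x \<mu> mod p = 0}"

lemma class_sum_add: "class_sum (x \<oplus>\<^bsub>R\<^esub> y) \<mu> mod p = (class_sum x \<mu> + class_sum y \<mu>) mod p"
  unfolding class_sum_def add_R by (simp add: mod_sum_eq sum.distrib)

lemma class_sum_mult: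
  "class_sum (x \<otimes>\<^bsub>R\<^esub> y) \<mu> mod p = (\<Sum>q\<in>C. \<Sum>r\<in>C. x q * y r * int (mset_struct_const q r \<mu>)) mod p"
proof -
  have "class_sum (x \<otimes>\<^bsub>R\<^esub> y) \<mu> = (\<Sum>c\<in>{c\<in>C. mset c = \<mu>}. mult_coeff x y c mod p)"
    unfolding class_sum_def by (rule sum.cong) (auto simp: mult_R)
  then have "class_sum (x \<otimes>\<^bsub>R\<^esub> y) \<mu> mod p = (\<Sum>c\<in>{c\<in>C. mset c = \<mu>}. mult_coeff x y c) mod p"
    by (simp add: mod_sum_eq)
  also have "(\<Sum>c\<in>{c\<in>C. mset c = \<mu>}. mult_coeff x y c)
      = (\<Sum>q\<in>C. \<Sum>r\<in>C. \<Sum>c\<in>{c\<in>C. mset c = \<mu>}. x q * y r * int (struct_const q r c))"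
    unfolding mult_coeff_def by (subst sum.swap) (simp only: sum.swap[where A = "{c\<in>C. mset c = \<mu>}"])
  also have "\<dots> = (\<Sum>q\<in>C. \<Sum>r\<in>C. x q * y r * int (mset_struct_const q r \<mu>))"
    by (intro sum.cong refl) (simp add: sum_struct_const_mset[symmetric] sum_distrib_left)
  finally show ?thesis .
qed

lemma minus_in_class_kernel:
  assumes x: "x \<in> carrier R" and y: "y \<in> carrier R"
    and same: "\<And>\<mu>. class_sum x \<mu> mod p = class_sum y \<mu> mod p"
  shows "x \<ominus>\<^bsub>R\<^esub> y \<in> class_kernel"
proof -
  interpret abelian_group R by (rule abelian_group_R)
  have "(x \<ominus>\<^bsub>R\<^esub> y) \<oplus>\<^bsub>R\<^esub> y = x" using x y by (simp add: minus_eq a_assoc l_neg)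
  then have "(class_sum (x \<ominus>\<^bsub>R\<^esub> y) \<mu> + class_sum y \<mu>) mod p = class_sum y \<mu> mod p" for \<mu>
    using class_sum_add[of "x \<ominus>\<^bsub>R\<^esub> y" y \<mu>] same[of \<mu>] by simp
  then have "class_sum (x \<ominus>\<^bsub>R\<^esub> y) \<mu> mod p = 0" for \<mu>
    unfolding mod_eq_dvd_iff by (simp add: mod_eq_0_iff_dvd)
  then show ?thesis unfolding class_kernel_def using x y by simp
qed

lemma additive_subgroup_class_kernel: "additive_subgroup class_kernel R"
proof -
  interpret abelian_group R by (rule abelian_group_R)
  have zero: "\<zero>\<^bsub>R\<^esub> \<in> class_kernel"
    using zero_closed by (simp add: class_kernel_def class_sum_def zero_R)
  show ?thesis
  proof (intro additive_subgroupI add.subgroupI)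
    show "class_kernel \<subseteq> carrier R" by (auto simp: class_kernel_def)
    show "class_kernel \<noteq> {}" using zero by blast
  next
    fix x y assume x: "x \<in> class_kernel" and y: "y \<in> class_kernel"
    then have carrier: "x \<in> carrier R" "y \<in> carrier R"
      and sums: "\<And>\<mu>. class_sum x \<mu> mod p = 0" "\<And>\<mu>. class_sum y \<mu> mod p = 0"
      by (auto simp: class_kernel_def)
    have "\<zero>\<^bsub>R\<^esub> \<ominus>\<^bsub>R\<^esub> x \<in> class_kernel"
      using minus_in_class_kernel[OF zero_closed carrier(1)] sums(1)
      by (simp add: class_sum_def zero_R)
    then show "\<ominus>\<^bsub>R\<^esub> x \<in> class_kernel"
      using carrier by (simp add: minus_eq)
    have "class_sum (x \<oplus>\<^bsub>R\<^esub> y) \<mu> mod p = 0" for \<mu>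
      using class_sum_add[of x y \<mu>] sums by (simp add: mod_add_eq[symmetric])
    then show "x \<oplus>\<^bsub>R\<^esub> y \<in> class_kernel"
      using carrier by (simp add: class_kernel_def)
  qed
qed

lemma sum_mod_eq_0_if_class_invariant:
  assumes y: "\<And>\<mu>. class_sum y \<mu> mod p = 0"
    and w: "\<And>r r'. r \<in> C \<Longrightarrow> r' \<in> C \<Longrightarrow> mset r = mset r' \<Longrightarrow> w r = w r'"
  shows "(\<Sum>r\<in>C. y r * w r) mod p = 0"
proof -
  have class_part: "(\<Sum>r\<in>{r. r \<in> C \<and> mset r = \<nu>}. y r * w r) mod p = 0" if \<nu>: "\<nu> \<in> mset ` C" for \<nu>
  proof -
    obtain r0 where r0: "r0 \<in> C" "mset r0 = \<nu>" using \<nu> by blast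
    have "(\<Sum>r\<in>{r. r \<in> C \<and> mset r = \<nu>}. y r * w r) = (\<Sum>r\<in>{r. r \<in> C \<and> mset r = \<nu>}. y r * w r0)"
    proof (rule sum.cong[OF refl])
      fix r assume "r \<in> {r. r \<in> C \<and> mset r = \<nu>}"
      then show "y r * w r = y r * w r0" using w[of r r0] r0 by simp
    qed
    also have "\<dots> = w r0 * class_sum y \<nu>"
      unfolding class_sum_def by (simp add: sum_distrib_left mult.commute)
    finally have "(\<Sum>r\<in>{r. r \<in> C \<and> mset r = \<nu>}. y r * w r) = w r0 * class_sum y \<nu>" .
    then show ?thesis using y[of \<nu>] by (simp add: mod_mult_right_eq[symmetric])
  qed
  have "(\<Sum>r\<in>C. y r * w r) = (\<Sum>\<nu>\<in>mset ` C. \<Sum>r\<in>{r. r \<in> C \<and> mset r = \<nu>}. y r * w r)"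
    by (rule sum.image_gen[OF finite_compositions])
  also have "\<dots> mod p = (\<Sum>\<nu>\<in>mset ` C. (\<Sum>r\<in>{r. r \<in> C \<and> mset r = \<nu>}. y r * w r) mod p) mod p"
    by (simp add: mod_sum_eq)
  also have "\<dots> = 0" using class_part by simp
  finally show ?thesis .
qed

lemma left_ideal_class_kernel: "left_ideal R class_kernel"
proof -
  have "a \<otimes>\<^bsub>R\<^esub> y \<in> class_kernel" if y: "y \<in> class_kernel" for a y
  proof -
    have sums: "\<And>\<mu>. class_sum y \<mu> mod p = 0" using y unfolding class_kernel_def by auto
    have "(\<Sum>r\<in>C. y r * (a q * int (mset_struct_const q r \<mu>))) mod p = 0" for q \<mu>
      by (rule sum_mod_eq_0_if_class_invariant[OF sums]) (metis mset_struct_const_permute)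
    then have "class_sum (a \<otimes>\<^bsub>R\<^esub> y) \<mu> mod p = 0" for \<mu>
      unfolding class_sum_mult by (subst mod_sum_eq[symmetric]) (simp add: mult_ac)
    then show ?thesis unfolding class_kernel_def using mult_R_closed by simp
  qed
  then show ?thesis
    using additive_subgroup_class_kernel unfolding left_ideal_def by blast
qed

lemma class_sum_mult_commute: "class_sum (a \<otimes>\<^bsub>R\<^esub> b) \<mu> mod p = class_sum (b \<otimes>\<^bsub>R\<^esub> a) \<mu> mod p"
proof -
  have "(\<Sum>q\<in>C. \<Sum>r\<in>C. b q * a r * int (mset_struct_const q r \<mu>))
      = (\<Sum>r\<in>C. \<Sum>q\<in>C. a r * b q * int (mset_struct_const r q \<mu>))"
    by (subst sum.swap) (simp add: mset_struct_const_transpose mult.commute)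
  then show ?thesis unfolding class_sum_mult by simp
qed

lemma commutator_in_class_kernel:
  "a \<in> carrier R \<Longrightarrow> b \<in> carrier R \<Longrightarrow> a \<otimes>\<^bsub>R\<^esub> b \<ominus>\<^bsub>R\<^esub> b \<otimes>\<^bsub>R\<^esub> a \<in> class_kernel"
  by (rule minus_in_class_kernel[OF mult_R_closed mult_R_closed class_sum_mult_commute])

definition length_filtration :: "nat \<Rightarrow> (nat list \<Rightarrow> int) set" where
  "length_filtration k = {x \<in> carrier R. \<forall>c. length c < k \<longrightarrow> x c = 0}"

text \<open>By struct_const_eq_0, only the summand y c B_c x of y x contributes to the coefficient
  at c.\<close>
lemma mult_coeff_length_filtration:
  assumes y: "y \<in> length_filtration k" and c: "c \<in> C" "length c \<le> k"
  shows "mult_coeff y x c = y c * (\<Sum>q\<in>C. x q * int (mset_struct_const c q (mset c)))"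
proof -
  have c_pos: "\<forall>a\<in>set c. 0 < a" using c unfolding compositions_def by simp
  let ?F = "\<lambda>s. \<Sum>q\<in>C. y s * x q * int (struct_const s q c)"
  have others: "?F s = 0" if s: "s \<in> C - {c}" for s
  proof (cases "length s < k")
    case True
    then show ?thesis using y unfolding length_filtration_def by simp
  next
    case False
    have "\<forall>a\<in>set s. 0 < a" using s unfolding compositions_def by simp
    then have "struct_const s q c = 0" for q
      using False c s by (intro struct_const_eq_0) auto
    then show ?thesis by simp
  qed
  have "mult_coeff y x c = ?F c + (\<Sum>s\<in>C - {c}. ?F s)"
    unfolding mult_coeff_def by (rule sum.remove[OF finite_compositions c(1)])
  also have "\<dots> = y c * (\<Sum>q\<in>C. x q * int (mset_struct_const c q (mset c)))"
    using others by (simp add: struct_const_self[OF c_pos] sum_distrib_left mult_ac)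
  finally show ?thesis .
qed

lemma length_filtration_mult_class_kernel:
  assumes y: "y \<in> length_filtration k" and x: "x \<in> class_kernel"
  shows "y \<otimes>\<^bsub>R\<^esub> x \<in> length_filtration (Suc k)"
proof -
  have sums: "\<And>\<mu>. class_sum x \<mu> mod p = 0" using x unfolding class_kernel_def by auto
  have "(y \<otimes>\<^bsub>R\<^esub> x) c = 0" if "length c < Suc k" for c
  proof (cases "c \<in> C")
    case False
    then show ?thesis by (simp add: mult_R)
  next
    case True
    have "(\<Sum>q\<in>C. x q * int (mset_struct_const c q (mset c))) mod p = 0"
      by (rule sum_mod_eq_0_if_class_invariant[OF sums]) (metis mset_struct_const_permute)
    then have "mult_coeff y x c mod p = 0"
      using mult_coeff_length_filtration[OF y True] that by (simp add: mod_mult_right_eq[symmetric])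
    then show ?thesis using True by (simp add: mult_R)
  qed
  then show ?thesis unfolding length_filtration_def using mult_R_closed by simp
qed

lemma length_filtration_Suc_n: "x \<in> length_filtration (Suc n) \<Longrightarrow> x = \<zero>\<^bsub>R\<^esub>"
proof
  fix c assume x: "x \<in> length_filtration (Suc n)"
  show "x c = \<zero>\<^bsub>R\<^esub> c"
  proof (cases "c \<in> C")
    case True
    then have "length c < Suc n"
      using length_le_sum_list[of c] unfolding compositions_def by simp
    then show ?thesis using x unfolding length_filtration_def zero_R by blast
  next
    case False
    then show ?thesis using x carrier_RD(2) unfolding length_filtration_def zero_R by blast
  qed
qed

lemma class_kernel_right_nil:
  assumes "y \<in> class_kernel"
  shows "((\<lambda>w. w \<otimes>\<^bsub>R\<^esub> y) ^^ Suc n) \<one>\<^bsub>R\<^esub> = \<zero>\<^bsub>R\<^esub>"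
proof -
  have "((\<lambda>w. w \<otimes>\<^bsub>R\<^esub> y) ^^ j) \<one>\<^bsub>R\<^esub> \<in> length_filtration j" for j
  proof (induction j)
    case 0
    show ?case using one_R_closed by (simp add: length_filtration_def)
  next
    case (Suc j)
    then show ?case using length_filtration_mult_class_kernel[OF _ assms] by simp
  qed
  then show ?thesis by (rule length_filtration_Suc_n)
qed

lemma class_kernel_subset_jacobson_radical: "class_kernel \<subseteq> jacobson_radical R"
  using right_unital_distrib.right_nil_left_ideal_subset_jacobson_radical[OF right_unital_distrib_R
      left_ideal_class_kernel] class_kernel_right_nil by blast

end

theorem theorem2p3:
  fixes n p :: nat
  assumes "n \<ge> 1" and "Factorial_Ring.prime p"
  shows "\<forall>A \<in> carrier (descent_alg_mod n p Quot jacobson_radical (descent_alg_mod n p)).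
         \<forall>B \<in> carrier (descent_alg_mod n p Quot jacobson_radical (descent_alg_mod n p)).
           A \<otimes>\<^bsub>descent_alg_mod n p Quot jacobson_radical (descent_alg_mod n p)\<^esub> B
         = B \<otimes>\<^bsub>descent_alg_mod n p Quot jacobson_radical (descent_alg_mod n p)\<^esub> A"
proof -
  interpret mod_descent_algebra n p
    using assms prime_gt_1_nat by unfold_locales auto
  interpret abelian_group R by (rule abelian_group_R)
  have "a \<otimes>\<^bsub>R\<^esub> b \<ominus>\<^bsub>R\<^esub> b \<otimes>\<^bsub>R\<^esub> a \<in> jacobson_radical R" if "a \<in> carrier R" "b \<in> carrier R" for a b
    using commutator_in_class_kernel[OF that] class_kernel_subset_jacobson_radical by blast
  then show ?thesis
    using FactRing_mult_commute[OF additive_subgroup_jacobson_radical mult_R_closed] by blast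
qed

end
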